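(* For any step size $\eta\ge0$ and any iteration $i$, \[ \eta(1-\eta\rho^2/8)\|\nabla\widehat{\mathcal R}(W_i)\|^2\le\widehat{\mathcal R}^{(i)}(W_i)-\widehat{\mathcal R}^{(i)}(W_{i+1}). \] If $\eta\le8/\rho^2$ then $\widehat{\mathcal R}^{(i)}(W_{i+1})\le\widehat{\mathcal R}^{(i)}(W_i)$, and if $\eta\le4/\rho^2$ then $\frac\eta2\|\nabla\widehat{\mathcal R}(W_i)\|^2\le\widehat{\mathcal R}^{(i)}(W_i)-\widehat{\mathcal R}^{(i)}(W_{i+1})$.
   Context: Sample $((x_k,y_k))_{k=1}^n$ with $\|x_k\|\le1$, $y_k\in\{\pm1\}$. $\ell(r)=\ln(1+e^{-r})$. Network of width $m$, temperature $\rho>0$, signs $a_j\in\{\pm1\}$: for $W$ with rows $w_j^\top$, $f(x;W)=\frac{\rho}{\sqrt m}\sum_ja_j\max\{0,w_j^\top x\}$, $\nabla f(x;W)=\frac{\rho}{\sqrt m}\sum_ja_j\mathbf 1[w_j^\top x\ge0]e_jx^\top$. $\widehat{\mathcal R}(W)=\frac1n\sum_k\ell(y_kf(x_k;W))$ and $\nabla\widehat{\mathcal R}(W)=\frac1n\sum_k\ell'(y_kf(x_k;W))y_k\nabla f(x_k;W)$. Gradient descent from $W_0$: $W_{i+1}=W_i-\eta\nabla\widehat{\mathcal R}(W_i)$. Features at time $i$: $\widehat{\mathcal R}^{(i)}(V)=\frac1n\sum_k\ell(y_k\langle\nabla f(x_k;W_i),V\rangle)$, $\langle A,B\rangle=\mathrm{tr}(A^\top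 B)$. $\|\cdot\|$ Frobenius norm. *)

theory Defs
  imports "HOL-Analysis.Analysis"
begin

text \<open>Weights W :: real^'d^'m (rows w_j = W$j), inputs x :: real^'d.
  The width is m = CARD('m). Frobenius norm/inner product = norm/inner on real^'d^'m.
  Samples are indexed by k < n.\<close>

definition logloss :: "real \<Rightarrow> real" where
  "logloss r = ln (1 + exp (- r))"

definition logloss' :: "real \<Rightarrow> real" where
  "logloss' r = - exp (- r) / (1 + exp (- r))"

definition net :: "real \<Rightarrow> ('m::finite \<Rightarrow> real) \<Rightarrow> real^'d^'m \<Rightarrow> real^'d \<Rightarrow> real" where
  "net \<rho> a W x = \<rho> / sqrt (real CARD('m)) * (\<Sum>j\<in>UNIV. a j * max 0 ((W $ j) \<bullet> x))"

definition net_grad :: "real \<Rightarrow> ('m::finite \<Rightarrow> real) \<Rightarrow> real^'d^'m \<Rightarrow> real^'d \<Rightarrow> real^'d^'m" where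
  "net_grad \<rho> a W x =
     (\<chi> j. (\<rho> / sqrt (real CARD('m)) * a j * (if (W $ j) \<bullet> x \<ge> 0 then 1 else 0)) *\<^sub>R x)"

definition emp_risk :: "nat \<Rightarrow> (nat \<Rightarrow> real^'d) \<Rightarrow> (nat \<Rightarrow> real) \<Rightarrow> real
    \<Rightarrow> ('m::finite \<Rightarrow> real) \<Rightarrow> real^'d^'m \<Rightarrow> real" where
  "emp_risk n x y \<rho> a W = (1 / real n) * (\<Sum>k<n. logloss (y k * net \<rho> a W (x k)))"

definition emp_risk_grad :: "nat \<Rightarrow> (nat \<Rightarrow> real^'d) \<Rightarrow> (nat \<Rightarrow> real) \<Rightarrow> real
    \<Rightarrow> ('m::finite \<Rightarrow> real) \<Rightarrow> real^'d^'m \<Rightarrow> real^'d^'m" where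
  "emp_risk_grad n x y \<rho> a W =
     (1 / real n) *\<^sub>R (\<Sum>k<n. (logloss' (y k * net \<rho> a W (x k)) * y k) *\<^sub>R net_grad \<rho> a W (x k))"

fun gd :: "nat \<Rightarrow> (nat \<Rightarrow> real^'d) \<Rightarrow> (nat \<Rightarrow> real) \<Rightarrow> real
    \<Rightarrow> ('m::finite \<Rightarrow> real) \<Rightarrow> real \<Rightarrow> real^'d^'m \<Rightarrow> nat \<Rightarrow> real^'d^'m" where
  "gd n x y \<rho> a \<eta> W0 0 = W0"
| "gd n x y \<rho> a \<eta> W0 (Suc i) =
     gd n x y \<rho> a \<eta> W0 i - \<eta> *\<^sub>R emp_risk_grad n x y \<rho> a (gd n x y \<rho> a \<eta> W0 i)"

text \<open>Feature (linearized) risk at W: R^(i)(V) with W = W_i.\<close>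
definition feat_risk :: "nat \<Rightarrow> (nat \<Rightarrow> real^'d) \<Rightarrow> (nat \<Rightarrow> real) \<Rightarrow> real
    \<Rightarrow> ('m::finite \<Rightarrow> real) \<Rightarrow> real^'d^'m \<Rightarrow> real^'d^'m \<Rightarrow> real" where
  "feat_risk n x y \<rho> a W V = (1 / real n) * (\<Sum>k<n. logloss (y k * (net_grad \<rho> a W (x k) \<bullet> V)))"

end

theory Submission
  imports Defs
begin

text \<open>The ReLU network is positively homogeneous, f(x; W) = \<langle>\<nabla>f(x; W), W\<rangle>, so the feature
  risk R^(i) has the same value and the same gradient at W_i as the empirical risk. A gradient
  step on the empirical risk is therefore a gradient step on the logistic risk of the linear
  predictor V \<mapsto> \<langle>\<nabla>f(x_k; W_i), V\<rangle>, whose features have norm at most \<rho>. Since the logistic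
  loss is (1/4)-smooth, the descent lemma for smooth functions gives the decrease
  \<eta>(1 - \<eta>\<rho>^2/8)\<parallel>\<nabla>R(W_i)\<parallel>^2.\<close>

lemma quadratic_upper_bound_one_sided_Lipschitz_deriv:
  fixes f f' :: "real \<Rightarrow> real" and L r s :: real
  assumes deriv: "\<And>t. (f has_real_derivative f' t) (at t)"
    and lipschitz: "\<And>u v. u \<le> v \<Longrightarrow> f' v - f' u \<le> L * (v - u)"
  shows "f (r + s) \<le> f r + f' r * s + L / 2 * s\<^sup>2"
proof -
  define h where "h s = f r + f' r * s + L / 2 * s\<^sup>2 - f (r + s)" for s
  have h_deriv: "(h has_real_derivative f' r + L * t - f' (r + t)) (at t)" for t :: real
    unfolding h_def[abs_def]
    by (rule derivative_eq_intros deriv[THEN DERIV_chain2] refl | simp)+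
  have "h 0 \<le> h s"
  proof (cases "0 \<le> s")
    case True
    show ?thesis
    proof (rule DERIV_nonneg_imp_nondecreasing[OF True])
      fix t :: real assume "0 \<le> t"
      then have "0 \<le> f' r + L * t - f' (r + t)" using lipschitz[of r "r + t"] by simp
      then show "\<exists>d. (h has_real_derivative d) (at t) \<and> 0 \<le> d" using h_deriv by blast
    qed
  next
    case False
    show ?thesis
    proof (rule DERIV_nonpos_imp_nonincreasing[of s 0])
      show "s \<le> 0" using False by simp
      fix t :: real assume "t \<le> 0"
      then have "f' r + L * t - f' (r + t) \<le> 0" using lipschitz[of "r + t" r] by simp
      then show "\<exists>d. (h has_real_derivative d) (at t) \<and> d \<le> 0" using h_deriv by blast
    qed
  qed
  then show ?thesis by (simp add: h_def)
qed

lemma logloss'_eq: "logloss' t = - 1 / (1 + exp t)"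
proof -
  have "logloss' t = (- exp (- t) * exp t) / ((1 + exp (- t)) * exp t)"
    unfolding logloss'_def by simp
  also have "\<dots> = - 1 / (1 + exp t)"
    by (simp add: distrib_right add.commute exp_minus)
  finally show ?thesis .
qed

lemma has_real_derivative_logloss: "(logloss has_real_derivative logloss' t) (at t)"
proof -
  have "((\<lambda>t. ln (1 + exp (- t))) has_real_derivative 1 / (1 + exp (- t)) * (exp (- t) * - 1)) (at t)"
    by (rule derivative_eq_intros | simp add: add_pos_pos)+
  then show ?thesis unfolding logloss_def[abs_def] logloss'_def by simp
qed

lemma has_real_derivative_logloss': "(logloss' has_real_derivative exp t / (1 + exp t)\<^sup>2) (at t)"
proof -
  have ne: "1 + exp t \<noteq> 0" by (smt (verit) exp_gt_zero)
  have "((\<lambda>t. - 1 / (1 + exp t)) has_real_derivative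
      (0 * (1 + exp t) - - 1 * (0 + exp t * 1)) / ((1 + exp t) * (1 + exp t))) (at t)"
    by (rule derivative_eq_intros refl | simp add: ne)+
  then show ?thesis unfolding logloss'_eq[abs_def] by (simp add: power2_eq_square)
qed

lemma exp_div_one_plus_exp_squared_le: "exp (t::real) / (1 + exp t)\<^sup>2 \<le> 1 / 4"
proof -
  have "4 * exp t \<le> (1 + exp t)\<^sup>2"
    using zero_le_power2[of "1 - exp t"] by (simp add: power2_eq_square algebra_simps)
  moreover have "0 < (1 + exp t)\<^sup>2" by (smt (verit) exp_gt_zero zero_less_power)
  ultimately show ?thesis by (simp add: field_simps)
qed

lemma logloss'_one_sided_Lipschitz:
  assumes "u \<le> v"
  shows "logloss' v - logloss' u \<le> (v - u) / 4"
proof -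
  have "logloss' v - v / 4 \<le> logloss' u - u / 4"
  proof (rule DERIV_nonpos_imp_nonincreasing[OF assms, where f = "\<lambda>t. logloss' t - t / 4"])
    fix t
    have "((\<lambda>t. logloss' t - t / 4) has_real_derivative exp t / (1 + exp t)\<^sup>2 - 1 / 4) (at t)"
      by (rule derivative_eq_intros has_real_derivative_logloss' refl | simp)+
    then show "\<exists>d. ((\<lambda>t. logloss' t - t / 4) has_real_derivative d) (at t) \<and> d \<le> 0"
      using exp_div_one_plus_exp_squared_le[of t] by auto
  qed
  then show ?thesis by simp
qed

lemma logloss_quadratic_upper_bound: "logloss (r + s) \<le> logloss r + logloss' r * s + s\<^sup>2 / 8"
  using quadratic_upper_bound_one_sided_Lipschitz_deriv[OF has_real_derivative_logloss,
      of "1 / 4" r s]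
    logloss'_one_sided_Lipschitz
  by simp

definition linear_risk :: "nat \<Rightarrow> (nat \<Rightarrow> 'a::real_inner) \<Rightarrow> (nat \<Rightarrow> real) \<Rightarrow> 'a \<Rightarrow> real" where
  "linear_risk n g y V = 1 / real n * (\<Sum>k<n. logloss (y k * (g k \<bullet> V)))"

definition linear_risk_grad :: "nat \<Rightarrow> (nat \<Rightarrow> 'a::real_inner) \<Rightarrow> (nat \<Rightarrow> real) \<Rightarrow> 'a \<Rightarrow> 'a" where
  "linear_risk_grad n g y V =
     (1 / real n) *\<^sub>R (\<Sum>k<n. (logloss' (y k * (g k \<bullet> V)) * y k) *\<^sub>R g k)"

lemma linear_risk_gradient_step_decrease:
  fixes g :: "nat \<Rightarrow> 'a::real_inner" and V :: 'a
  assumes g_bound: "\<forall>k<n. norm (g k) \<le> B"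
    and y_bound: "\<forall>k<n. \<bar>y k\<bar> \<le> 1"
  defines "G \<equiv> linear_risk_grad n g y V"
  shows "\<eta> * (1 - \<eta> * B\<^sup>2 / 8) * (norm G)\<^sup>2
           \<le> linear_risk n g y V - linear_risk n g y (V - \<eta> *\<^sub>R G)"
proof -
  define N where "N = (norm G)\<^sup>2"
  define r where "r k = y k * (g k \<bullet> V)" for k
  define s where "s k = - \<eta> * (y k * (g k \<bullet> G))" for k
  have step: "y k * (g k \<bullet> (V - \<eta> *\<^sub>R G)) = r k + s k" for k
    by (simp add: r_def s_def inner_diff_right algebra_simps)
  have first_order: "1 / real n * (\<Sum>k<n. logloss' (r k) * s k) = - \<eta> * N"
  proof -
    have "N = G \<bullet> G" by (simp add: N_def power2_norm_eq_inner)
    also have "\<dots> = 1 / real n * (\<Sum>k<n. logloss' (r k) * y k * (g k \<bullet> G))"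
      by (subst (1) G_def) (simp add: linear_risk_grad_def r_def inner_sum_left)
    finally show ?thesis by (simp add: s_def sum_distrib_left sum_negf algebra_simps)
  qed
  have second_order: "(s k)\<^sup>2 \<le> \<eta>\<^sup>2 * B\<^sup>2 * N" if "k < n" for k
  proof -
    have "\<bar>g k \<bullet> G\<bar> \<le> B * norm G"
      using Cauchy_Schwarz_ineq2[of "g k" G] g_bound that
      by (meson mult_right_mono norm_ge_zero order_trans)
    moreover have "\<bar>y k\<bar> \<le> 1" using y_bound that by simp
    ultimately have "\<bar>y k * (g k \<bullet> G)\<bar> \<le> B * norm G"
      by (simp add: abs_mult) (meson abs_ge_zero mult_left_le_one_le order_trans)
    then have "(y k * (g k \<bullet> G))\<^sup>2 \<le> (B * norm G)\<^sup>2"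
      by (metis abs_ge_zero power2_abs power_mono)
    then have "\<eta>\<^sup>2 * (y k * (g k \<bullet> G))\<^sup>2 \<le> \<eta>\<^sup>2 * (B * norm G)\<^sup>2"
      by (rule mult_left_mono) simp
    then show ?thesis by (simp add: s_def N_def power_mult_distrib)
  qed
  have "linear_risk n g y (V - \<eta> *\<^sub>R G) = 1 / real n * (\<Sum>k<n. logloss (r k + s k))"
    by (simp add: linear_risk_def step)
  also have "\<dots> \<le> 1 / real n * (\<Sum>k<n. logloss (r k) + logloss' (r k) * s k + (s k)\<^sup>2 / 8)"
    by (intro mult_left_mono sum_mono logloss_quadratic_upper_bound) simp
  also have "\<dots> = linear_risk n g y V - \<eta> * N + 1 / real n * (\<Sum>k<n. (s k)\<^sup>2 / 8)"
    using first_order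
    by (simp add: linear_risk_def r_def sum.distrib distrib_left)
  also have "1 / real n * (\<Sum>k<n. (s k)\<^sup>2 / 8) \<le> 1 / real n * (\<Sum>k<n. \<eta>\<^sup>2 * B\<^sup>2 * N / 8)"
    by (intro mult_left_mono sum_mono) (use second_order in auto)
  also have "\<dots> \<le> \<eta>\<^sup>2 * B\<^sup>2 * N / 8"
    by (simp add: N_def)
  finally show ?thesis by (simp add: N_def algebra_simps power2_eq_square)
qed

lemma net_eq_inner_net_grad:
  fixes W :: "real^'d^'m::finite"
  shows "net \<rho> a W x = net_grad \<rho> a W x \<bullet> W"
proof -
  have "net_grad \<rho> a W x \<bullet> W
      = (\<Sum>j\<in>UNIV. \<rho> / sqrt (real CARD('m)) * (a j * max 0 ((W $ j) \<bullet> x)))"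
    unfolding net_grad_def
    by (subst inner_vec_def) (rule sum.cong, auto simp: inner_commute max_def)
  then show ?thesis unfolding net_def by (simp add: sum_distrib_left)
qed

lemma norm_net_grad_le:
  fixes W :: "real^'d^'m::finite"
  assumes "\<forall>j. \<bar>a j\<bar> \<le> 1" and "norm x \<le> 1"
  shows "norm (net_grad \<rho> a W x) \<le> \<bar>\<rho>\<bar>"
proof -
  define c where "c j = \<rho> / sqrt (real CARD('m)) * a j * (if (W $ j) \<bullet> x \<ge> 0 then 1 else 0)"
    for j
  have c_sq: "(c j)\<^sup>2 \<le> \<rho>\<^sup>2 / real CARD('m)" for j
  proof -
    have "(a j)\<^sup>2 \<le> 1" using assms(1) by (simp add: abs_square_le_1)
    then have "\<rho>\<^sup>2 * (a j)\<^sup>2 \<le> \<rho>\<^sup>2" by (simp add: mult_left_le)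
    then show ?thesis
      unfolding c_def by (auto simp: power_mult_distrib power_divide divide_right_mono)
  qed
  have x_sq: "x \<bullet> x \<le> 1"
    using assms(2) by (simp add: power_le_one power2_norm_eq_inner[symmetric])
  have "(norm (net_grad \<rho> a W x))\<^sup>2 = (\<Sum>j\<in>UNIV. (c j *\<^sub>R x) \<bullet> (c j *\<^sub>R x))"
    unfolding power2_norm_eq_inner net_grad_def c_def by (subst inner_vec_def) simp
  also have "\<dots> = (\<Sum>j\<in>UNIV. (c j)\<^sup>2 * (x \<bullet> x))"
    by (simp add: power2_eq_square mult.assoc)
  also have "\<dots> \<le> (\<Sum>j\<in>(UNIV::'m set). \<rho>\<^sup>2 / real CARD('m))"
    using c_sq x_sq by (intro sum_mono) (meson mult_left_le order_trans zero_le_power2)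
  also have "\<dots> = \<bar>\<rho>\<bar>\<^sup>2" by simp
  finally show ?thesis by (rule power2_le_imp_le) simp
qed

lemma feat_risk_eq_linear_risk:
  "feat_risk n x y \<rho> a W = linear_risk n (\<lambda>k. net_grad \<rho> a W (x k)) y"
  by (simp add: fun_eq_iff feat_risk_def linear_risk_def)

lemma emp_risk_grad_eq_linear_risk_grad:
  "emp_risk_grad n x y \<rho> a W = linear_risk_grad n (\<lambda>k. net_grad \<rho> a W (x k)) y W"
  by (simp add: emp_risk_grad_def linear_risk_grad_def net_eq_inner_net_grad)

lemma step_size_bounds_imp_decrease:
  fixes \<eta> c N \<Delta> :: real
  assumes decrease: "\<eta> * (1 - \<eta> * c / 8) * N \<le> \<Delta>"
    and "0 \<le> \<eta>" "0 \<le> N" "0 < c"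
  shows "(\<eta> \<le> 8 / c \<longrightarrow> 0 \<le> \<Delta>) \<and> (\<eta> \<le> 4 / c \<longrightarrow> \<eta> / 2 * N \<le> \<Delta>)"
proof (intro conjI impI)
  assume "\<eta> \<le> 8 / c"
  then have "0 \<le> 1 - \<eta> * c / 8" using \<open>0 < c\<close> by (simp add: field_simps)
  then show "0 \<le> \<Delta>" using decrease \<open>0 \<le> \<eta>\<close> \<open>0 \<le> N\<close> by (meson mult_nonneg_nonneg order_trans)
next
  assume "\<eta> \<le> 4 / c"
  then have "1 / 2 \<le> 1 - \<eta> * c / 8" using \<open>0 < c\<close> by (simp add: field_simps)
  then have "\<eta> * (1 / 2) * N \<le> \<eta> * (1 - \<eta> * c / 8) * N"
    using \<open>0 \<le> \<eta>\<close> \<open>0 \<le> N\<close> by (intro mult_right_mono mult_left_mono)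
  then show "\<eta> / 2 * N \<le> \<Delta>" using decrease by simp
qed

theorem lemmaA9:
  fixes n :: nat and x :: "nat \<Rightarrow> real^'d" and y :: "nat \<Rightarrow> real"
    and \<rho> :: real and a :: "'m::finite \<Rightarrow> real" and \<eta> :: real
    and W0 :: "real^'d^'m" and i :: nat
  assumes hx: "\<forall>k<n. norm (x k) \<le> 1"
    and hy: "\<forall>k<n. y k \<in> {-1, 1}"
    and ha: "\<forall>j. a j \<in> {-1, 1}"
    and h\<rho>: "\<rho> > 0"
    and h\<eta>: "\<eta> \<ge> 0"
  shows "let Wi = gd n x y \<rho> a \<eta> W0 i; Wi' = gd n x y \<rho> a \<eta> W0 (Suc i);
             G = emp_risk_grad n x y \<rho> a Wi;
             Ri = feat_risk n x y \<rho> a Wi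
         in \<eta> * (1 - \<eta> * \<rho>\<^sup>2 / 8) * (norm G)\<^sup>2 \<le> Ri Wi - Ri Wi'
            \<and> (\<eta> \<le> 8 / \<rho>\<^sup>2 \<longrightarrow> Ri Wi' \<le> Ri Wi)
            \<and> (\<eta> \<le> 4 / \<rho>\<^sup>2 \<longrightarrow> \<eta> / 2 * (norm G)\<^sup>2 \<le> Ri Wi - Ri Wi')"
proof -
  define W where "W = gd n x y \<rho> a \<eta> W0 i"
  define g where "g = (\<lambda>k. net_grad \<rho> a W (x k))"
  define G where "G = linear_risk_grad n g y W"
  define R where "R = linear_risk n g y"
  have a_bound: "\<forall>j. \<bar>a j\<bar> \<le> 1"
    using ha by (metis abs_minus_cancel abs_one insertE order_refl singletonD)
  have "\<forall>k<n. norm (g k) \<le> \<rho>"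
    using norm_net_grad_le[OF a_bound, of _ \<rho> W] hx h\<rho> by (simp add: g_def)
  moreover have "\<forall>k<n. \<bar>y k\<bar> \<le> 1" using hy by auto
  ultimately have decrease: "\<eta> * (1 - \<eta> * \<rho>\<^sup>2 / 8) * (norm G)\<^sup>2 \<le> R W - R (W - \<eta> *\<^sub>R G)"
    unfolding R_def G_def by (rule linear_risk_gradient_step_decrease)
  moreover have "emp_risk_grad n x y \<rho> a W = G" "feat_risk n x y \<rho> a W = R"
    by (simp_all add: G_def R_def g_def emp_risk_grad_eq_linear_risk_grad feat_risk_eq_linear_risk)
  ultimately show ?thesis
    using step_size_bounds_imp_decrease[OF decrease h\<eta> zero_le_power2] h\<rho>
    by (simp add: Let_def flip: W_def)
qed

end
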